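(* Let $\Omega$ be a set and $G$ a subgroup of $S=\mathrm{Sym}(\Omega)$ which is discrete in the function topology on $S$ and such that each element of $G$ moves only finitely many elements of $\Omega$. Then $G$ is finite.
   Context: $\mathrm{Sym}(\Omega)$ is the group of all permutations of $\Omega$, with the function topology (pointwise convergence, $\Omega$ discrete); discrete means discrete in the subspace topology. *)

theory Defs
  imports "HOL-Analysis.Analysis" "HOL-Algebra.Bij"
begin

text \<open>Its topspace is
  the set of extensional maps \<Omega> \<rightarrow> \<Omega>, which contains Bij \<Omega> = carrier of
  Sym(\<Omega>) = BijGroup \<Omega>.\<close>
definition fun_topology_on :: "'a set \<Rightarrow> ('a \<Rightarrow> 'a) topology" where
  "fun_topology_on \<Omega> = product_topology (\<lambda>_. discrete_topology \<Omega>) \<Omega>"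

end

(* Discreteness at the identity yields a finite set F \<subseteq> \<Omega> whose pointwise stabiliser
   in G is trivial (a finite base). If G were infinite, a Ramsey-type argument gives an
   infinite G' \<subseteq> G on which each map g \<mapsto> g\<inverse>(f), f \<in> F, is constant or injective.
   For distinct g1, g2 \<in> G' the element a = g1\<inverse> g2 \<noteq> 1 has finite support S and fixes
   the constant values, so all but finitely many g \<in> G' satisfy g\<inverse>(F) \<inter> S = {}. For such g
   the conjugate g a g\<inverse> fixes F pointwise, hence is trivial, and so a = 1. *)

theory Submission
  imports Defs
begin

lemma infinite_subset_const_or_inj_on:
  assumes "infinite X"
  obtains Y where "Y \<subseteq> X" "infinite Y" "(\<exists>c. \<forall>x\<in>Y. f x = c) \<or> inj_on f Y"
proof (cases "finite (f ` X)")
  case True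
  then obtain x0 where "infinite {x\<in>X. f x = f x0}"
    using pigeonhole_infinite assms by blast
  then show thesis by (rule that[rotated]) auto
next
  case False
  let ?Y = "inv_into X f ` f ` X"
  have "inj_on (inv_into X f) (f ` X)" by (rule inj_on_inv_into) simp
  then have "infinite ?Y" using False by (simp add: finite_image_iff)
  moreover have "inj_on f ?Y" by (rule inj_onI) (auto simp: f_inv_into_f)
  ultimately show thesis by (intro that) (auto intro: inv_into_into)
qed

lemma finite_family_infinite_subset_const_or_inj_on:
  assumes "finite I" "infinite X"
  shows "\<exists>Y\<subseteq>X. infinite Y \<and> (\<forall>i\<in>I. (\<exists>c. \<forall>x\<in>Y. f i x = c) \<or> inj_on (f i) Y)"
  using assms(1)
proof (induction I rule: finite_induct)
  case empty
  then show ?case using assms(2) by blast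
next
  case (insert i I)
  then obtain Y where Y: "Y \<subseteq> X" "infinite Y" "\<forall>j\<in>I. (\<exists>c. \<forall>x\<in>Y. f j x = c) \<or> inj_on (f j) Y"
    by blast
  obtain Z where Z: "Z \<subseteq> Y" "infinite Z" "(\<exists>c. \<forall>x\<in>Z. f i x = c) \<or> inj_on (f i) Z"
    using infinite_subset_const_or_inj_on[OF Y(2)] by blast
  have "\<forall>j\<in>I. (\<exists>c. \<forall>x\<in>Z. f j x = c) \<or> inj_on (f j) Z"
    using Y(3) Z(1) by (meson inj_on_subset subsetD)
  then show ?case using Y(1) Z by blast
qed

lemma discrete_in_fun_topology_determined_on_finite_set:
  assumes discrete: "subtopology (fun_topology_on \<Omega>) G = discrete_topology G"
    and "h \<in> G"
  obtains F where "finite F" "F \<subseteq> \<Omega>" "\<And>g. g \<in> G \<Longrightarrow> \<forall>x\<in>F. g x = h x \<Longrightarrow> g = h"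
proof -
  have "topspace (subtopology (fun_topology_on \<Omega>) G) = G"
    using discrete by simp
  then have G_funcset: "G \<subseteq> \<Omega> \<rightarrow>\<^sub>E \<Omega>"
    by (auto simp: fun_topology_on_def)
  have "openin (subtopology (fun_topology_on \<Omega>) G) {h}"
    using discrete \<open>h \<in> G\<close> by simp
  then obtain U where U: "openin (fun_topology_on \<Omega>) U" "{h} = U \<inter> G"
    by (meson openin_subtopology)
  have "h \<in> U" using U(2) by blast
  with U(1) obtain V where V: "finite {x\<in>\<Omega>. V x \<noteq> \<Omega>}" "h \<in> Pi\<^sub>E \<Omega> V" "Pi\<^sub>E \<Omega> V \<subseteq> U"
    unfolding fun_topology_on_def openin_product_topology_alt by fastforce
  show thesis
  proof (rule that)
    show "finite {x\<in>\<Omega>. V x \<noteq> \<Omega>}" by (fact V(1))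
  next
    fix g assume g: "g \<in> G" "\<forall>x\<in>{x\<in>\<Omega>. V x \<noteq> \<Omega>}. g x = h x"
    have "g \<in> Pi\<^sub>E \<Omega> V"
    proof (rule PiE_I)
      fix x assume "x \<in> \<Omega>"
      then show "g x \<in> V x"
        using g V(2) G_funcset by (cases "V x = \<Omega>") (auto simp: PiE_iff)
    next
      fix x assume "x \<notin> \<Omega>"
      then show "g x = undefined" using g(1) G_funcset by (auto simp: PiE_iff extensional_def)
    qed
    then show "g = h" using V(3) U(2) g(1) by blast
  qed auto
qed

lemma Bij_apply_inv_into: "f \<in> Bij S \<Longrightarrow> x \<in> S \<Longrightarrow> f (inv_into S f x) = x"
  by (simp add: Bij_def bij_betw_def f_inv_into_f)

lemma BijGroup_mult_apply:
  "f \<in> Bij S \<Longrightarrow> g \<in> Bij S \<Longrightarrow> x \<in> S \<Longrightarrow> (f \<otimes>\<^bsub>BijGroup S\<^esub> g) x = f (g x)"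
  by (simp add: BijGroup_def compose_def)

lemma BijGroup_inv_apply:
  "f \<in> Bij S \<Longrightarrow> x \<in> S \<Longrightarrow> (inv\<^bsub>BijGroup S\<^esub> f) x = inv_into S f x"
  by (simp add: inv_BijGroup)

lemma BijGroup_inv_Bij: "f \<in> Bij S \<Longrightarrow> inv\<^bsub>BijGroup S\<^esub> f \<in> Bij S"
  by (simp add: inv_BijGroup restrict_inv_into_Bij)

lemma BijGroup_one_apply: "x \<in> S \<Longrightarrow> \<one>\<^bsub>BijGroup S\<^esub> x = x"
  by (simp add: BijGroup_def)

lemma BijGroup_conj_apply:
  assumes "g \<in> Bij S" "a \<in> Bij S" "x \<in> S"
  shows "(g \<otimes>\<^bsub>BijGroup S\<^esub> a \<otimes>\<^bsub>BijGroup S\<^esub> inv\<^bsub>BijGroup S\<^esub> g) x = g (a (inv_into S g x))"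
proof -
  interpret group "BijGroup S" by (rule group_BijGroup)
  have "inv\<^bsub>BijGroup S\<^esub> g \<in> Bij S" "g \<otimes>\<^bsub>BijGroup S\<^esub> a \<in> Bij S"
    using assms inv_closed[of g] m_closed[of g a] by (simp_all add: BijGroup_def)
  then show ?thesis
    using assms by (simp add: BijGroup_mult_apply BijGroup_inv_apply Bij_inv_into_mem)
qed

lemma BijGroup_inv_mult_fixes_common_preimage:
  assumes "g1 \<in> Bij S" "g2 \<in> Bij S" "y \<in> S" "inv_into S g1 y = inv_into S g2 y"
  shows "(inv\<^bsub>BijGroup S\<^esub> g1 \<otimes>\<^bsub>BijGroup S\<^esub> g2) (inv_into S g1 y) = inv_into S g1 y"
proof -
  let ?c = "inv_into S g1 y"
  have "g2 ?c = y" using assms(2-4) by (simp add: Bij_apply_inv_into)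
  moreover have "?c \<in> S" using assms(1,3) by (rule Bij_inv_into_mem)
  ultimately show ?thesis
    using assms(1-3) by (simp add: BijGroup_mult_apply BijGroup_inv_apply BijGroup_inv_Bij)
qed

lemma finite_hitting_set_if_const_outside_or_inj_on:
  assumes "finite F" "finite S"
    and "\<forall>f\<in>F. (\<exists>c. c \<notin> S \<and> (\<forall>x\<in>X. \<phi> f x = c)) \<or> inj_on (\<phi> f) X"
  shows "finite {x\<in>X. \<exists>f\<in>F. \<phi> f x \<in> S}"
proof -
  have "finite {x\<in>X. \<phi> f x \<in> S}" if "f \<in> F" for f
  proof -
    from assms(3) that
    consider c where "c \<notin> S" "\<And>x. x \<in> X \<Longrightarrow> \<phi> f x = c" | "inj_on (\<phi> f) X" by blast
    then show ?thesis
    proof cases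
      case 1
      then have "{x\<in>X. \<phi> f x \<in> S} = {}" by auto
      then show ?thesis by (metis finite.emptyI)
    next
      case 2
      then have "inj_on (\<phi> f) {x\<in>X. \<phi> f x \<in> S}" by (rule inj_on_subset) blast
      then show ?thesis by (rule inj_on_finite) (use \<open>finite S\<close> in auto)
    qed
  qed
  then have "finite (\<Union>f\<in>F. {x\<in>X. \<phi> f x \<in> S})" using \<open>finite F\<close> by blast
  then show ?thesis by (rule rev_finite_subset) blast
qed

lemma eq_one_if_fixes_preimages_of_base:
  assumes subgroup: "subgroup G (BijGroup \<Omega>)"
    and "F \<subseteq> \<Omega>"
    and base: "\<And>g. g \<in> G \<Longrightarrow> \<forall>x\<in>F. g x = x \<Longrightarrow> g = \<one>\<^bsub>BijGroup \<Omega>\<^esub>"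
    and "a \<in> G" "g \<in> G"
    and fixes_preimages: "\<And>x. x \<in> F \<Longrightarrow> a (inv_into \<Omega> g x) = inv_into \<Omega> g x"
  shows "a = \<one>\<^bsub>BijGroup \<Omega>\<^esub>"
proof -
  interpret Sym: group "BijGroup \<Omega>" by (rule group_BijGroup)
  interpret subgroup G "BijGroup \<Omega>" by (rule subgroup)
  have Bij: "g \<in> Bij \<Omega>" "a \<in> Bij \<Omega>"
    using subset \<open>g \<in> G\<close> \<open>a \<in> G\<close> by (auto simp: BijGroup_def)
  let ?b = "g \<otimes>\<^bsub>BijGroup \<Omega>\<^esub> a \<otimes>\<^bsub>BijGroup \<Omega>\<^esub> inv\<^bsub>BijGroup \<Omega>\<^esub> g"
  have "?b x = x" if "x \<in> F" for x
    using that \<open>F \<subseteq> \<Omega>\<close> Bij fixes_preimages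
    by (auto simp: BijGroup_conj_apply Bij_apply_inv_into)
  then have "?b = \<one>\<^bsub>BijGroup \<Omega>\<^esub>"
    using base \<open>g \<in> G\<close> \<open>a \<in> G\<close> by simp
  then have "g \<otimes>\<^bsub>BijGroup \<Omega>\<^esub> a = g"
    using \<open>g \<in> G\<close> \<open>a \<in> G\<close> by (simp add: Sym.inv_solve_right')
  then show ?thesis
    using \<open>g \<in> G\<close> \<open>a \<in> G\<close> by simp
qed

lemma finite_if_finite_supports_and_finite_base:
  assumes subgroup: "subgroup G (BijGroup \<Omega>)"
    and finite_support: "\<And>g. g \<in> G \<Longrightarrow> finite {x\<in>\<Omega>. g x \<noteq> x}"
    and "finite F" "F \<subseteq> \<Omega>"
    and base: "\<And>g. g \<in> G \<Longrightarrow> \<forall>x\<in>F. g x = x \<Longrightarrow> g = \<one>\<^bsub>BijGroup \<Omega>\<^esub>"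
  shows "finite G"
proof (rule ccontr)
  assume "infinite G"
  interpret Sym: group "BijGroup \<Omega>" by (rule group_BijGroup)
  interpret subgroup G "BijGroup \<Omega>" by (rule subgroup)
  obtain G' where G': "G' \<subseteq> G" "infinite G'"
    and const_or_inj: "\<forall>f\<in>F. (\<exists>c. \<forall>g\<in>G'. inv_into \<Omega> g f = c) \<or> inj_on (\<lambda>g. inv_into \<Omega> g f) G'"
    using finite_family_infinite_subset_const_or_inj_on[OF \<open>finite F\<close> \<open>infinite G\<close>,
        of "\<lambda>f g. inv_into \<Omega> g f"] by blast
  obtain g1 where g1: "g1 \<in> G'" using infinite_imp_nonempty[OF G'(2)] by blast
  have "infinite (G' - {g1})" using G'(2) by simp
  then obtain g2 where g2: "g2 \<in> G'" "g2 \<noteq> g1"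
    using infinite_imp_nonempty by blast
  have g12: "g1 \<in> G" "g2 \<in> G" using g1 g2 G'(1) by auto
  then have g12_Bij: "g1 \<in> Bij \<Omega>" "g2 \<in> Bij \<Omega>" using subset by (auto simp: BijGroup_def)
  define a where "a = inv\<^bsub>BijGroup \<Omega>\<^esub> g1 \<otimes>\<^bsub>BijGroup \<Omega>\<^esub> g2"
  have "a \<in> G" using g12 by (simp add: a_def)
  have "a \<noteq> \<one>\<^bsub>BijGroup \<Omega>\<^esub>"
    using g12 g2(2) subset by (auto simp: a_def Sym.inv_solve_left')
  define S where "S = {x\<in>\<Omega>. a x \<noteq> x}"
  have "finite S" using finite_support \<open>a \<in> G\<close> by (simp add: S_def)
  have "(\<exists>c. c \<notin> S \<and> (\<forall>g\<in>G'. inv_into \<Omega> g f = c)) \<or> inj_on (\<lambda>g. inv_into \<Omega> g f) G'"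
    if "f \<in> F" for f
  proof -
    from const_or_inj that
    consider c where "\<forall>g\<in>G'. inv_into \<Omega> g f = c" | "inj_on (\<lambda>g. inv_into \<Omega> g f) G'" by blast
    then show ?thesis
    proof cases
      case (1 c)
      then have c: "c = inv_into \<Omega> g1 f" "inv_into \<Omega> g1 f = inv_into \<Omega> g2 f"
        using g1 g2(1) by auto
      have "f \<in> \<Omega>" using that \<open>F \<subseteq> \<Omega>\<close> by blast
      have "a c = c"
        unfolding a_def c(1) using g12_Bij \<open>f \<in> \<Omega>\<close> c(2) by (rule BijGroup_inv_mult_fixes_common_preimage)
      with 1 show ?thesis by (auto simp: S_def)
    qed simp
  qed
  then have "finite {g\<in>G'. \<exists>f\<in>F. inv_into \<Omega> g f \<in> S}"
    using \<open>finite F\<close> \<open>finite S\<close> by (intro finite_hitting_set_if_const_outside_or_inj_on) auto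
  then have "infinite (G' - {g\<in>G'. \<exists>f\<in>F. inv_into \<Omega> g f \<in> S})" using G'(2) by simp
  then obtain g where g: "g \<in> G'" "\<forall>f\<in>F. inv_into \<Omega> g f \<notin> S"
    using infinite_imp_nonempty by blast
  then have "g \<in> G" using G'(1) by blast
  then have "g \<in> Bij \<Omega>" using subset by (auto simp: BijGroup_def)
  have "a (inv_into \<Omega> g x) = inv_into \<Omega> g x" if "x \<in> F" for x
    using g(2) that \<open>F \<subseteq> \<Omega>\<close> \<open>g \<in> Bij \<Omega>\<close> by (auto simp: S_def Bij_inv_into_mem)
  then have "a = \<one>\<^bsub>BijGroup \<Omega>\<^esub>"
    using eq_one_if_fixes_preimages_of_base[OF subgroup \<open>F \<subseteq> \<Omega>\<close> base \<open>a \<in> G\<close> \<open>g \<in> G\<close>]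
    by blast
  with \<open>a \<noteq> \<one>\<^bsub>BijGroup \<Omega>\<^esub>\<close> show False ..
qed

theorem lemma11p1:
  fixes \<Omega> :: "'a set" and G :: "('a \<Rightarrow> 'a) set"
  assumes "subgroup G (BijGroup \<Omega>)"
    and "subtopology (fun_topology_on \<Omega>) G = discrete_topology G"
    and "\<forall>g\<in>G. finite {x\<in>\<Omega>. g x \<noteq> x}"
  shows "finite G"
proof -
  have "\<one>\<^bsub>BijGroup \<Omega>\<^esub> \<in> G" using assms(1) by (rule subgroup.one_closed)
  with assms(2) obtain F where F: "finite F" "F \<subseteq> \<Omega>"
    and determined: "\<And>g. g \<in> G \<Longrightarrow> \<forall>x\<in>F. g x = \<one>\<^bsub>BijGroup \<Omega>\<^esub> x \<Longrightarrow> g = \<one>\<^bsub>BijGroup \<Omega>\<^esub>"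
    by (rule discrete_in_fun_topology_determined_on_finite_set) blast
  have "g = \<one>\<^bsub>BijGroup \<Omega>\<^esub>" if "g \<in> G" "\<forall>x\<in>F. g x = x" for g
    using determined that F(2) by (simp add: BijGroup_one_apply subset_iff)
  with assms(1,3) F show ?thesis
    by (intro finite_if_finite_supports_and_finite_base) auto
qed

end
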